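(* Let $0<\alpha\le\delta<\infty$, $0<\gamma<\tfrac13$, and let $H_{\gamma/\delta}$ be the Banach space of real sequences $x=(x_k)_{k\ge0}$ with $\|x\|=\sum_{k\ge0}(\gamma/\delta)^k|x_k|<\infty$. Let $\mathcal R^a_1(a)_k=\frac{1}{k+1}\sum_{n=0}^ka_na_{k-n}$. If $a_0\in X_{\alpha,\delta}$ and $a(t)$ denotes the solution of the initial value problem $\frac{d}{dt}a(t)=\mathcal R^a_1(a(t))-a(t)$, $a(0)=a_0$, in $H_{\gamma/\delta}$, then $a(t)\in X_{\alpha,\delta}$ for all $t\ge0$ and $\lim_{t\to\infty}\|a(t)-\bar\alpha\|=0$, where $\bar\alpha=(1,\alpha,\alpha^2,\alpha^3,\dots)$.
   Context: $X_{\alpha,\delta}$ is the set of real sequences $a=(a_k)_{k\ge0}$ with $a_0=1$, $a_1=\alpha$, $0\le a_k\le\delta^k$ for $k\ge2$; it is a subset of $H_{\gamma/\delta}$, and the metric on it is $d(a,b)=\|a-b\|$. *)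

theory Defs
  imports "HOL-Analysis.Analysis"
begin

definition inH :: "real \<Rightarrow> (nat \<Rightarrow> real) \<Rightarrow> bool" where
  "inH w x \<longleftrightarrow> summable (\<lambda>k. w ^ k * \<bar>x k\<bar>)"

definition hnorm :: "real \<Rightarrow> (nat \<Rightarrow> real) \<Rightarrow> real" where
  "hnorm w x = (\<Sum>k. w ^ k * \<bar>x k\<bar>)"

definition Xset :: "real \<Rightarrow> real \<Rightarrow> (nat \<Rightarrow> real) set" where
  "Xset \<alpha> \<delta> = {a. a 0 = 1 \<and> a 1 = \<alpha> \<and> (\<forall>k\<ge>2. 0 \<le> a k \<and> a k \<le> \<delta> ^ k)}"

definition R1 :: "(nat \<Rightarrow> real) \<Rightarrow> nat \<Rightarrow> real" where
  "R1 a k = (1 / real (k + 1)) * (\<Sum>n\<le>k. a n * a (k - n))"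

text \<open>a is a solution on [0,\<infinity>) in H_w of a' = R1 a - a with a(0) = a0,
  the derivative taken in the H_w norm (one-sided at t = 0).\<close>
definition is_solution :: "real \<Rightarrow> (nat \<Rightarrow> real) \<Rightarrow> (real \<Rightarrow> nat \<Rightarrow> real) \<Rightarrow> bool" where
  "is_solution w a0 a \<longleftrightarrow>
     a 0 = a0 \<and> (\<forall>t\<ge>0. inH w (a t) \<and> inH w (R1 (a t))) \<and>
     (\<forall>t\<ge>0. ((\<lambda>s. hnorm w (\<lambda>k. (a s k - a t k) / (s - t) - (R1 (a t) k - a t k)))
               \<longlongrightarrow> 0) (at t within {0..}))"

end

theory Submission
  imports Defs "HOL-Real_Asymp.Real_Asymp"
begin

(* Coordinate evaluation is continuous on H_w, so every coordinate of the solution satisfies the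
   scalar equation a_k' = R1(a)_k - a_k.  This system is triangular: a_0' = a_0^2 - a_0 keeps a_0 = 1,
   then a_1' = 0, and for k >= 2
     a_k' = -(k - 1)/(k + 1) a_k + (1/(k + 1)) sum_{0<n<k} a_n a_{k-n},
   a linear equation whose forcing term involves only lower coordinates.  By induction on k,
   comparison for this linear equation keeps a_k in [0, delta^k] and drives it to alpha^k.
   Finally (gamma/delta)^k |a_k(t) - alpha^k| <= 2 gamma^k, so Tannery's theorem upgrades
   coordinatewise convergence to convergence in norm. *)

lemma inH_diff:
  assumes "0 \<le> w" "inH w x" "inH w y"
  shows "inH w (\<lambda>k. x k - y k)"
  unfolding inH_def
proof (rule summable_comparison_test')
  show "summable (\<lambda>k. w ^ k * \<bar>x k\<bar> + w ^ k * \<bar>y k\<bar>)"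
    using assms by (intro summable_add) (auto simp: inH_def)
  show "norm (w ^ k * \<bar>x k - y k\<bar>) \<le> w ^ k * \<bar>x k\<bar> + w ^ k * \<bar>y k\<bar>" for k
    using \<open>0 \<le> w\<close> by (simp flip: distrib_left add: mult_left_mono abs_triangle_ineq4)
qed

lemma inH_divide:
  assumes "inH w x"
  shows "inH w (\<lambda>k. x k / c)"
  using summable_divide[OF assms[unfolded inH_def], of "\<bar>c\<bar>"]
  by (simp add: inH_def abs_divide)

lemma abs_le_hnorm:
  assumes "0 < w" "inH w x"
  shows "\<bar>x k\<bar> \<le> hnorm w x / w ^ k"
proof -
  have "(\<Sum>j\<in>{k}. w ^ j * \<bar>x j\<bar>) \<le> hnorm w x"
    unfolding hnorm_def using assms by (intro sum_le_suminf) (auto simp: inH_def)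
  then show ?thesis
    using \<open>0 < w\<close> by (simp add: field_simps)
qed

lemma tendsto_coordinate_zero_if_hnorm_tendsto_zero:
  assumes "0 < w" "eventually (\<lambda>s. inH w (x s)) F" "((\<lambda>s. hnorm w (x s)) \<longlongrightarrow> 0) F"
  shows "((\<lambda>s. x s k) \<longlongrightarrow> 0) F"
proof (rule Lim_null_comparison)
  show "eventually (\<lambda>s. norm (x s k) \<le> hnorm w (x s) / w ^ k) F"
    using assms(2) by eventually_elim (use abs_le_hnorm[OF \<open>0 < w\<close>] in auto)
  show "((\<lambda>s. hnorm w (x s) / w ^ k) \<longlongrightarrow> 0) F"
    using tendsto_divide_zero[OF assms(3)] .
qed

lemma is_solution_coordinate_deriv:
  assumes "0 < w" "is_solution w a0 a" "0 \<le> t"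
  shows "((\<lambda>s. a s k) has_real_derivative (R1 (a t) k - a t k)) (at t within {0..})"
proof -
  define q where "q s = (\<lambda>k. (a s k - a t k) / (s - t) - (R1 (a t) k - a t k))" for s
  have "inH w (q s)" if "0 \<le> s" for s
    unfolding q_def using assms that
    by (auto simp: is_solution_def intro!: inH_diff inH_divide)
  then have "eventually (\<lambda>s. inH w (q s)) (at t within {0..})"
    unfolding eventually_at_filter by (auto intro: always_eventually)
  moreover have "((\<lambda>s. hnorm w (q s)) \<longlongrightarrow> 0) (at t within {0..})"
    using assms unfolding is_solution_def q_def by blast
  ultimately have "((\<lambda>s. q s k) \<longlongrightarrow> 0) (at t within {0..})"
    by (rule tendsto_coordinate_zero_if_hnorm_tendsto_zero[OF \<open>0 < w\<close>])
  then show ?thesis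
    unfolding has_field_derivative_iff q_def by (simp add: LIM_zero_iff)
qed

lemma nonincreasing_if_has_real_derivative_nonpos:
  fixes f f' :: "real \<Rightarrow> real"
  assumes "T \<le> t"
    and f: "\<And>x. x \<in> {T..t} \<Longrightarrow> (f has_real_derivative f' x) (at x within {T..t})"
    and "\<And>x. x \<in> {T..t} \<Longrightarrow> f' x \<le> 0"
  shows "f t \<le> f T"
proof (rule DERIV_nonpos_imp_decreasing_open[OF \<open>T \<le> t\<close>])
  show "continuous_on {T..t} f"
    using f by (meson continuous_on_eq_continuous_within DERIV_continuous)
  fix x assume "T < x" "x < t"
  then show "\<exists>y. DERIV f x :> y \<and> y \<le> 0"
    using f[of x] assms(3)[of x] by (auto simp: at_within_Icc_at)
qed

lemma linear_ode_upper_bound: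
  fixes y F :: "real \<Rightarrow> real"
  assumes y: "\<And>s. 0 \<le> s \<Longrightarrow> (y has_real_derivative (- c * y s + F s)) (at s within {0..})"
    and F: "\<And>s. T \<le> s \<Longrightarrow> F s \<le> c * B"
    and "0 \<le> T" "T \<le> t"
  shows "y t - B \<le> exp (- c * (t - T)) * (y T - B)"
proof -
  define h where "h s = exp (c * s) * (y s - B)" for s
  have "(h has_real_derivative (exp (c * s) * (F s - c * B))) (at s within {T..t})"
    if "s \<in> {T..t}" for s
  proof -
    have "(y has_real_derivative (- c * y s + F s)) (at s within {T..t})"
      using y[of s] that \<open>0 \<le> T\<close> by (auto intro: has_field_derivative_subset)
    then show ?thesis
      unfolding h_def by (auto intro!: derivative_eq_intros simp: algebra_simps)
  qed
  then have "h t \<le> h T"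
    by (rule nonincreasing_if_has_real_derivative_nonpos[OF \<open>T \<le> t\<close>])
      (use F in \<open>auto intro!: mult_nonneg_nonpos\<close>)
  then have "exp (c * t) * (y t - B) \<le> exp (c * T) * (y T - B)"
    by (simp add: h_def)
  then have "exp (- c * t) * (exp (c * t) * (y t - B)) \<le> exp (- c * t) * (exp (c * T) * (y T - B))"
    by (simp add: mult_left_mono)
  then show ?thesis
    by (simp add: algebra_simps flip: exp_add)
qed

lemma linear_ode_lower_bound:
  fixes y F :: "real \<Rightarrow> real"
  assumes y: "\<And>s. 0 \<le> s \<Longrightarrow> (y has_real_derivative (- c * y s + F s)) (at s within {0..})"
    and F: "\<And>s. T \<le> s \<Longrightarrow> c * B \<le> F s"
    and "0 \<le> T" "T \<le> t"
  shows "exp (- c * (t - T)) * (y T - B) \<le> y t - B"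
proof -
  have "- y t - - B \<le> exp (- c * (t - T)) * (- y T - - B)"
  proof (rule linear_ode_upper_bound[where y = "\<lambda>s. - y s" and F = "\<lambda>s. - F s"])
    show "((\<lambda>s. - y s) has_real_derivative (- c * - y s + - F s)) (at s within {0..})"
      if "0 \<le> s" for s
      using DERIV_minus[OF y[OF that]] by simp
  qed (use assms in auto)
  then show ?thesis
    by (simp add: algebra_simps)
qed

lemma linear_ode_invariant_interval:
  fixes y F :: "real \<Rightarrow> real"
  assumes y: "\<And>s. 0 \<le> s \<Longrightarrow> (y has_real_derivative (- c * y s + F s)) (at s within {0..})"
    and F: "\<And>s. 0 \<le> s \<Longrightarrow> 0 \<le> F s \<and> F s \<le> c * B"
    and "0 \<le> y 0" "y 0 \<le> B" "0 \<le> t"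
  shows "0 \<le> y t \<and> y t \<le> B"
proof
  have "exp (- c * (t - 0)) * (y 0 - 0) \<le> y t - 0"
    by (rule linear_ode_lower_bound[OF y]) (use F \<open>0 \<le> t\<close> in auto)
  then show "0 \<le> y t"
    using \<open>0 \<le> y 0\<close> by (smt (verit) exp_gt_zero mult_nonneg_nonneg)
  have "y t - B \<le> exp (- c * (t - 0)) * (y 0 - B)"
    by (rule linear_ode_upper_bound[OF y]) (use F \<open>0 \<le> t\<close> in auto)
  then show "y t \<le> B"
    using \<open>y 0 \<le> B\<close> by (smt (verit) exp_gt_zero mult_nonneg_nonpos)
qed

lemma linear_ode_tendsto:
  fixes y F :: "real \<Rightarrow> real"
  assumes "0 < c"
    and y: "\<And>s. 0 \<le> s \<Longrightarrow> (y has_real_derivative (- c * y s + F s)) (at s within {0..})"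
    and F: "(F \<longlongrightarrow> c * L) at_top"
  shows "(y \<longlongrightarrow> L) at_top"
proof (rule tendstoI)
  fix \<epsilon> :: real assume "0 < \<epsilon>"
  define e where "e = \<epsilon> / 2"
  have "0 < e" using \<open>0 < \<epsilon>\<close> by (simp add: e_def)
  have "eventually (\<lambda>s. \<bar>F s - c * L\<bar> < c * e) at_top"
    using tendstoD[OF F] \<open>0 < c\<close> \<open>0 < e\<close> by (simp add: dist_real_def)
  then obtain T where "0 \<le> T" and T: "\<And>s. T \<le> s \<Longrightarrow> \<bar>F s - c * L\<bar> < c * e"
    unfolding eventually_at_top_linorder by (metis max.cobounded1 max.cobounded2 order_trans)
  then have F_lower: "c * (L - e) \<le> F s" and F_upper: "F s \<le> c * (L + e)" if "T \<le> s" for s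
    using that by (fastforce simp: distrib_left right_diff_distrib abs_less_iff)+
  have bound: "\<bar>y t - L\<bar> \<le> e + exp (- c * (t - T)) * (\<bar>y T - L\<bar> + e)" if "T \<le> t" for t
  proof -
    have "y t - (L + e) \<le> exp (- c * (t - T)) * (y T - (L + e))"
      by (rule linear_ode_upper_bound[OF y F_upper \<open>0 \<le> T\<close> that])
    moreover have "exp (- c * (t - T)) * (y T - (L - e)) \<le> y t - (L - e)"
      by (rule linear_ode_lower_bound[OF y F_lower \<open>0 \<le> T\<close> that])
    moreover have "exp (- c * (t - T)) * (y T - (L + e)) \<le> exp (- c * (t - T)) * (\<bar>y T - L\<bar> + e)"
      and "- (exp (- c * (t - T)) * (\<bar>y T - L\<bar> + e)) \<le> exp (- c * (t - T)) * (y T - (L - e))"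
      using \<open>0 < e\<close> by (auto intro!: mult_left_mono simp flip: mult_minus_right)
    ultimately show ?thesis
      by linarith
  qed
  have "((\<lambda>t. exp (- c * (t - T)) * (\<bar>y T - L\<bar> + e)) \<longlongrightarrow> 0) at_top"
    using \<open>0 < c\<close> by real_asymp
  then have "eventually (\<lambda>t. exp (- c * (t - T)) * (\<bar>y T - L\<bar> + e) < e) at_top"
    using \<open>0 < e\<close> by (auto dest: order_tendstoD)
  then show "eventually (\<lambda>t. dist (y t) L < \<epsilon>) at_top"
    using eventually_ge_at_top[of T]
    by eventually_elim (use bound in \<open>fastforce simp: dist_real_def e_def\<close>)
qed

lemma ode_square_minus_id_stays_one:
  fixes y :: "real \<Rightarrow> real"
  assumes y: "\<And>s. 0 \<le> s \<Longrightarrow> (y has_real_derivative (y s * y s - y s)) (at s within {0..})"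
    and "y 0 = 1" "0 \<le> t"
  shows "y t = 1"
proof -
  have "continuous_on {0..} y"
    using y by (meson atLeast_iff continuous_on_eq_continuous_within DERIV_continuous)
  then have "continuous_on {0..t} y"
    by (rule continuous_on_subset) auto
  then obtain M where M: "\<And>s. s \<in> {0..t} \<Longrightarrow> y s \<le> M"
    using continuous_attains_sup[OF compact_Icc] \<open>0 \<le> t\<close> by (metis atLeastAtMost_iff empty_iff order_refl)
  define f where "f s = exp (- 2 * M * s) * (y s - 1)\<^sup>2" for s
  have f_deriv: "(f has_real_derivative exp (- 2 * M * s) * (2 * (y s - 1)\<^sup>2 * (y s - M))) (at s within {0..t})"
    if "s \<in> {0..t}" for s
  proof -
    have "(y has_real_derivative (y s * y s - y s)) (at s within {0..t})"
      using y[of s] that by (auto intro: has_field_derivative_subset)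
    then show ?thesis
      unfolding f_def by (auto intro!: derivative_eq_intros simp: algebra_simps power2_eq_square)
  qed
  moreover have "exp (- 2 * M * s) * (2 * (y s - 1)\<^sup>2 * (y s - M)) \<le> 0" if "s \<in> {0..t}" for s
    using M[OF that] by (intro mult_nonneg_nonpos mult_nonneg_nonneg) simp_all
  ultimately have "f t \<le> f 0"
    by (rule nonincreasing_if_has_real_derivative_nonpos[OF \<open>0 \<le> t\<close>])
  then have "(y t - 1)\<^sup>2 \<le> 0"
    using \<open>y 0 = 1\<close> by (simp add: f_def mult_le_0_iff)
  then show ?thesis
    by simp
qed

definition R1_interior :: "(nat \<Rightarrow> real) \<Rightarrow> nat \<Rightarrow> real" where
  "R1_interior x k = (\<Sum>n\<in>{1..k-1}. x n * x (k - n)) / (real k + 1)"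

lemma R1_0: "R1 x 0 = x 0 * x 0"
  by (simp add: R1_def)

lemma R1_1: "x 0 = 1 \<Longrightarrow> R1 x 1 = x 1"
  by (simp add: R1_def)

lemma R1_minus_id:
  assumes "2 \<le> k" "x 0 = 1"
  shows "R1 x k - x k = - ((real k - 1) / (real k + 1)) * x k + R1_interior x k"
proof -
  define S where "S = (\<Sum>n\<in>{1..k-1}. x n * x (k - n))"
  have "(\<Sum>n\<le>k. x n * x (k - n)) = 2 * x k + S"
    using assms unfolding S_def
    by (cases k) (auto simp: sum.atMost_Suc atMost_atLeast0 sum.atLeast_Suc_atMost)
  then have "R1 x k - x k = (2 * x k + S) / (real k + 1) - x k"
    by (simp add: R1_def)
  also have "\<dots> = - ((real k - 1) / (real k + 1)) * x k + S / (real k + 1)"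
  proof -
    have "real k + 1 \<noteq> 0" by linarith
    then show ?thesis by (simp add: divide_simps) (simp add: algebra_simps)
  qed
  finally show ?thesis
    by (simp add: R1_interior_def S_def)
qed

lemma R1_interior_bounds:
  assumes "1 \<le> k" and x: "\<And>n. 1 \<le> n \<Longrightarrow> n < k \<Longrightarrow> 0 \<le> x n \<and> x n \<le> \<delta> ^ n"
  shows "0 \<le> R1_interior x k \<and> R1_interior x k \<le> (real k - 1) / (real k + 1) * \<delta> ^ k"
proof -
  have term_bounds: "0 \<le> x n * x (k - n) \<and> x n * x (k - n) \<le> \<delta> ^ k" if "n \<in> {1..k-1}" for n
  proof -
    have "1 \<le> n" "n < k" "1 \<le> k - n" "k - n < k"
      using that \<open>1 \<le> k\<close> by auto
    then have "0 \<le> x n" "x n \<le> \<delta> ^ n" "0 \<le> x (k - n)" "x (k - n) \<le> \<delta> ^ (k - n)"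
      using x by blast+
    then have "x n * x (k - n) \<le> \<delta> ^ n * \<delta> ^ (k - n)"
      by (intro mult_mono) auto
    also have "\<dots> = \<delta> ^ k"
      using \<open>n < k\<close> by (simp flip: power_add)
    finally show ?thesis
      using \<open>0 \<le> x n\<close> \<open>0 \<le> x (k - n)\<close> by simp
  qed
  have "(\<Sum>n\<in>{1..k-1}. x n * x (k - n)) \<le> real (card {1..k-1}) * \<delta> ^ k"
    using term_bounds by (intro sum_bounded_above) auto
  moreover have "real (card {1..k-1}) = real k - 1"
    using \<open>1 \<le> k\<close> by (simp add: of_nat_diff)
  moreover have "0 \<le> (\<Sum>n\<in>{1..k-1}. x n * x (k - n))"
    using term_bounds by (intro sum_nonneg) auto
  ultimately show ?thesis
    by (simp add: R1_interior_def divide_right_mono)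
qed

lemma R1_interior_power:
  assumes "1 \<le> k"
  shows "R1_interior (\<lambda>n. \<alpha> ^ n) k = (real k - 1) / (real k + 1) * \<alpha> ^ k"
proof -
  have "(\<Sum>n\<in>{1..k-1}. \<alpha> ^ n * \<alpha> ^ (k - n)) = (\<Sum>n\<in>{1..k-1}. \<alpha> ^ k)"
    by (rule sum.cong) (auto simp flip: power_add)
  then show ?thesis
    using assms by (simp add: R1_interior_def of_nat_diff)
qed

lemma tendsto_R1_interior:
  assumes "\<And>n. n < k \<Longrightarrow> ((\<lambda>t. x t n) \<longlongrightarrow> y n) F"
  shows "((\<lambda>t. R1_interior (x t) k) \<longlongrightarrow> R1_interior y k) F"
  unfolding R1_interior_def by (intro tendsto_intros assms) auto

context
  fixes w :: real and a0 :: "nat \<Rightarrow> real" and a :: "real \<Rightarrow> nat \<Rightarrow> real"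
  assumes w: "0 < w" and solution: "is_solution w a0 a" and a0_0: "a0 0 = 1"
begin

lemma solution_init: "a 0 = a0"
  using solution by (simp add: is_solution_def)

lemma solution_coordinate_0: "0 \<le> t \<Longrightarrow> a t 0 = 1"
  by (rule ode_square_minus_id_stays_one)
    (use is_solution_coordinate_deriv[OF w solution, of _ 0] in \<open>auto simp: R1_0 solution_init a0_0\<close>)

lemma solution_coordinate_1: "0 \<le> t \<Longrightarrow> a t 1 = a0 1"
proof -
  have "((\<lambda>s. a s 1) has_real_derivative 0) (at s within {0..})" if "s \<in> {0..}" for s
    using is_solution_coordinate_deriv[OF w solution, of s 1] R1_1[of "a s"]
      solution_coordinate_0[of s] that
    by simp
  then obtain c where "\<forall>s\<in>{0..}. a s 1 = c"
    using has_field_derivative_zero_constant[OF convex_real_interval(1)] by blast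
  then show "0 \<le> t \<Longrightarrow> a t 1 = a0 1"
    by (metis atLeast_iff order_refl solution_init)
qed

lemma solution_coordinate_deriv:
  assumes "2 \<le> k" "0 \<le> s"
  shows "((\<lambda>s. a s k) has_real_derivative
      (- ((real k - 1) / (real k + 1)) * a s k + R1_interior (a s) k)) (at s within {0..})"
  using is_solution_coordinate_deriv[OF w solution assms(2), of k]
  by (simp add: R1_minus_id assms solution_coordinate_0)

lemma solution_in_Xset:
  assumes "0 \<le> \<alpha>" "\<alpha> \<le> \<delta>" "a0 \<in> Xset \<alpha> \<delta>" "0 \<le> t"
  shows "a t \<in> Xset \<alpha> \<delta>"
proof -
  have a0: "a0 1 = \<alpha>" "\<And>k. 2 \<le> k \<Longrightarrow> 0 \<le> a0 k \<and> a0 k \<le> \<delta> ^ k"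
    using assms(3) by (auto simp: Xset_def)
  have bounds: "0 \<le> a s k \<and> a s k \<le> \<delta> ^ k" if "1 \<le> k" "0 \<le> s" for k s
    using that
  proof (induction k arbitrary: s rule: less_induct)
    case (less k)
    show ?case
    proof (cases "k = 1")
      case True
      then show ?thesis
        using solution_coordinate_1[OF less.prems(2)] a0(1) assms(1,2) by simp
    next
      case False
      with less.prems have "2 \<le> k"
        by simp
      have interior_bounds:
        "0 \<le> R1_interior (a r) k \<and> R1_interior (a r) k \<le> (real k - 1) / (real k + 1) * \<delta> ^ k"
        if r: "0 \<le> r" for r
      proof (rule R1_interior_bounds)
        show "0 \<le> a r n \<and> a r n \<le> \<delta> ^ n" if "1 \<le> n" "n < k" for n
          using less.IH[OF \<open>n < k\<close> \<open>1 \<le> n\<close> r] .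
      qed (use \<open>2 \<le> k\<close> in simp)
      show ?thesis
        using linear_ode_invariant_interval[OF solution_coordinate_deriv[OF \<open>2 \<le> k\<close>] interior_bounds]
          a0(2)[OF \<open>2 \<le> k\<close>] less.prems(2) by (simp add: solution_init)
    qed
  qed
  show ?thesis
    unfolding Xset_def
    using solution_coordinate_0[OF \<open>0 \<le> t\<close>] solution_coordinate_1[OF \<open>0 \<le> t\<close>] a0(1)
      bounds[OF _ \<open>0 \<le> t\<close>] by simp
qed

lemma solution_coordinate_tendsto: "((\<lambda>t. a t k) \<longlongrightarrow> a0 1 ^ k) at_top"
proof (induction k rule: less_induct)
  case (less k)
  show ?case
  proof (cases "2 \<le> k")
    case False
    then have "k = 0 \<or> k = 1"
      by auto
    then have coordinate_eq: "a t k = a0 1 ^ k" if "0 \<le> t" for t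
      using solution_coordinate_0[OF that] solution_coordinate_1[OF that] by auto
    have "eventually (\<lambda>t. a t k = a0 1 ^ k) at_top"
      using eventually_ge_at_top[of 0] by (rule eventually_mono) (rule coordinate_eq)
    then show ?thesis
      by (rule tendsto_eventually)
  next
    case True
    have "((\<lambda>t. R1_interior (a t) k) \<longlongrightarrow> R1_interior (\<lambda>n. a0 1 ^ n) k) at_top"
      by (rule tendsto_R1_interior) (rule less.IH)
    also have "R1_interior (\<lambda>n. a0 1 ^ n) k = (real k - 1) / (real k + 1) * a0 1 ^ k"
      using True by (intro R1_interior_power) simp
    finally have "((\<lambda>t. R1_interior (a t) k) \<longlongrightarrow> (real k - 1) / (real k + 1) * a0 1 ^ k) at_top" .
    then show ?thesis
      by (intro linear_ode_tendsto[OF _ solution_coordinate_deriv[OF True]]) (use True in simp_all)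
  qed
qed

end

lemma hnorm_tendsto_zero_if_dominated:
  assumes "0 \<le> w" "\<And>k. ((\<lambda>t. x t k) \<longlongrightarrow> 0) F"
    and "eventually (\<lambda>t. \<forall>k. w ^ k * \<bar>x t k\<bar> \<le> M k) F" "summable M" "F \<noteq> bot"
  shows "((\<lambda>t. hnorm w (x t)) \<longlongrightarrow> 0) F"
proof -
  have "((\<lambda>t. \<Sum>k. w ^ k * \<bar>x t k\<bar>) \<longlongrightarrow> (\<Sum>k. 0)) F"
  proof (rule tannerys_theorem[THEN conjunct2, THEN conjunct2])
    show "((\<lambda>t. w ^ k * \<bar>x t k\<bar>) \<longlongrightarrow> 0) F" for k
      using tendsto_mult_right_zero[OF tendsto_rabs_zero[OF assms(2)]] by simp
    have "eventually (\<lambda>(k::nat, t). \<forall>j. w ^ j * \<bar>x t j\<bar> \<le> M j) (at_top \<times>\<^sub>F F)"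
      using assms(3) by (simp add: eventually_prod2)
    then show "eventually (\<lambda>(k, t). norm (w ^ k * \<bar>x t k\<bar>) \<le> M k) (at_top \<times>\<^sub>F F)"
      by (rule eventually_mono) (auto simp: \<open>0 \<le> w\<close>)
  qed (use assms in auto)
  then show ?thesis
    by (simp add: hnorm_def)
qed

lemma Xset_coordinate_bounds:
  assumes "0 \<le> \<alpha>" "\<alpha> \<le> \<delta>" "x \<in> Xset \<alpha> \<delta>"
  shows "0 \<le> x k \<and> x k \<le> \<delta> ^ k"
proof -
  consider "k = 0" | "k = 1" | "2 \<le> k"
    by linarith
  then show ?thesis
    using assms by cases (auto simp: Xset_def)
qed

lemma Xset_weighted_dist_le:
  assumes "0 \<le> w" "0 \<le> \<alpha>" "\<alpha> \<le> \<delta>" "x \<in> Xset \<alpha> \<delta>"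
  shows "w ^ k * \<bar>x k - \<alpha> ^ k\<bar> \<le> 2 * (w * \<delta>) ^ k"
proof -
  have "0 \<le> x k" "x k \<le> \<delta> ^ k"
    using Xset_coordinate_bounds[OF assms(2-4)] by auto
  moreover have "0 \<le> \<alpha> ^ k" "\<alpha> ^ k \<le> \<delta> ^ k"
    using assms(2,3) by (auto intro: power_mono)
  ultimately have "\<bar>x k - \<alpha> ^ k\<bar> \<le> 2 * \<delta> ^ k"
    unfolding abs_le_iff by linarith
  then have "w ^ k * \<bar>x k - \<alpha> ^ k\<bar> \<le> w ^ k * (2 * \<delta> ^ k)"
    using \<open>0 \<le> w\<close> by (simp add: mult_left_mono)
  then show ?thesis
    by (simp add: power_mult_distrib)
qed

theorem proposition13:
  fixes \<alpha> \<delta> \<gamma> :: real and a0 :: "nat \<Rightarrow> real" and a :: "real \<Rightarrow> nat \<Rightarrow> real"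
  assumes "0 < \<alpha>" "\<alpha> \<le> \<delta>" "0 < \<gamma>" "\<gamma> < 1/3"
    and "a0 \<in> Xset \<alpha> \<delta>"
    and "is_solution (\<gamma> / \<delta>) a0 a"
  shows "(\<forall>t\<ge>0. a t \<in> Xset \<alpha> \<delta>) \<and>
         ((\<lambda>t. hnorm (\<gamma> / \<delta>) (\<lambda>k. a t k - \<alpha> ^ k)) \<longlongrightarrow> 0) at_top"
proof
  have "0 < \<delta>" and w: "0 < \<gamma> / \<delta>"
    using assms(1-3) by simp_all
  have a0: "a0 0 = 1" "a0 1 = \<alpha>"
    using assms(5) by (auto simp: Xset_def)
  show in_Xset: "\<forall>t\<ge>0. a t \<in> Xset \<alpha> \<delta>"
    using solution_in_Xset[OF w assms(6) a0(1)] assms(1,2,5) by simp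
  have dominated: "eventually (\<lambda>t. \<forall>k. (\<gamma> / \<delta>) ^ k * \<bar>a t k - \<alpha> ^ k\<bar> \<le> 2 * \<gamma> ^ k) at_top"
    using eventually_ge_at_top[of 0] by eventually_elim
      (use Xset_weighted_dist_le[of "\<gamma> / \<delta>" \<alpha> \<delta>] in_Xset w assms(1,2) \<open>0 < \<delta>\<close> in simp)
  have coordinate_lim: "((\<lambda>t. a t k - \<alpha> ^ k) \<longlongrightarrow> 0) at_top" for k
    using solution_coordinate_tendsto[OF w assms(6) a0(1), of k] a0(2) by (simp add: LIM_zero)
  have summable: "summable (\<lambda>k. 2 * \<gamma> ^ k)" \<comment> \<open>only \<open>\<gamma> < 1\<close> is needed\<close>
    using assms(3,4) by (intro summable_mult summable_geometric) simp
  show "((\<lambda>t. hnorm (\<gamma> / \<delta>) (\<lambda>k. a t k - \<alpha> ^ k)) \<longlongrightarrow> 0) at_top"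
    by (rule hnorm_tendsto_zero_if_dominated[OF _ coordinate_lim dominated summable]) (use w in simp_all)
qed

end
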